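(* Let $Config=(R,F,M,I)$ be a configuration of legal rules and let $ASP_{Config}$ be its answer set program encoding (both defined in the context). Let $A_{Config}$ be any answer set (stable model) of $ASP_{Config}$, and let $S_{A_{Config}}$ be the set of all atoms of the forms $is\_legal(\cdot)$ and $legally\_valid(\cdot,\cdot)$ belonging to $A_{Config}$. Then $S_{A_{Config}}$ is a legal model of $Config$.
   Context: A configuration is a tuple $Config=(R,F,M,I)$ where: $R$ is a finite set of rules, each rule $r$ having a unique integer id (also denoted $r$), a precondition $pre\_con(r)$ which is a conjunction $b_1\wedge\dots\wedge b_m\wedge not\ b_{m+1}\wedge\dots\wedge not\ b_n$ of ground atoms and negation-as-failure literals, and a conclusion $C_r$ which is a single ground atom; $F$ is a finite set of ground atoms (facts); $M$ is a finite set of ground atoms of the forms $despite(r_i,r_j)$, $subject\_to(r_i,r_j)$, $strong\_subject\_to(r_i,r_j)$ with $r_i,r_j$ rule ids; $I$ is a finite collection of finite sets of ground atoms ("minimal inconsistent sets"), each containing at least 2 atoms. For a set $S$ of atoms, $S\models is\_legal(pre\_con(r))$ means: $is\_legal(b_i)\in S$ for every positive atom $b_i$ of $pre\_con(r)$ and $is\_legal(b_j)\notin S$ for every negated atom $not\ b_j$; for a set of atoms $A$, $is\_legal(A)=\{is\_legal(a): a\in A\}$. A set $S$ of atoms of the forms $is\_legal(c)$ and $legally\_valid(r,c)$ is a legal model of $Config$ iff: (A1) $is\_legal(f)\in S$ for all $f\in F$; (A2) for all $r\in R$, if $legally\_valid(r,C_r)\in S$ then $S\models is\_legal(pre\_con(r))$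 and $is\_legal(C_r)\in S$; (A3) for all $c$, if $is\_legal(c)\in S$ then $c\in F$ or there is $r\in R$ with $legally\_valid(r,C_r)\in S$ and $c=C_r$; (A4) for all $r_i,r_j\in R$, if $despite(r_i,r_j)\in M$ and $S\models is\_legal(pre\_con(r_j))$ then $legally\_valid(r_i,C_{r_i})\notin S$; (A5) for all $r_i,r_j\in R$, if $strong\_subject\_to(r_i,r_j)\in M$ and $legally\_valid(r_i,C_{r_i})\in S$ then $legally\_valid(r_j,C_{r_j})\notin S$; (A6) for all $r_i,r_j\in R$, if $subject\_to(r_i,r_j)\in M$, $legally\_valid(r_i,C_{r_i})\in S$, and there is $k\in I$ containing $C_{r_i}$ and $C_{r_j}$ as two distinct elements with $is\_legal(k\setminus\{C_{r_j}\})\subseteq S$, then $legally\_valid(r_j,C_{r_j})\notin S$; (A7) for all $r\in R$, if $S\models is\_legal(pre\_con(r))$ but $legally\_valid(r,C_r)\notin S$, then this exclusion is forced by one of (A4)–(A6), i.e. there is $r'\in R$ such that either $despite(r,r')\in M$ and $S\models is\_legal(pre\_con(r'))$; or $strong\_subject\_to(r',r)\in M$ and $legally\_valid(r',C_{r'})\in S$; or $subject\_to(r',r)\in M$, $legally\_valid(r',C_{r'})\in S$ and some $k\in I$ contains $C_{r'}$ and $C_r$ as distinct elements with $is\_legal(k\setminus\{C_r\})\subseteq S$. The program $ASP_{Config}$ (atoms of the configuration are used as ground terms; $R,C,R1,C1,X,Y$ are variables; $not$ is negation as failure) consists of: the fact $is\_legal(f).$ for each $f\in F$; each element of $M$ as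 a fact; for each rule $r$ with $pre\_con(r)=b_1\wedge\dots\wedge b_m\wedge not\ b_{m+1}\wedge\dots\wedge not\ b_n$ the rule $according\_to(r,C_r)\leftarrow is\_legal(b_1),\dots,is\_legal(b_m),not\ is\_legal(b_{m+1}),\dots,not\ is\_legal(b_n).$; for each $k=\{a_1,\dots,a_n\}\in I$ and each $1\le i<j\le n$ the rule $opposes(a_i,a_j)\leftarrow is\_legal(a_l)$ for all $l\notin\{i,j\}$; and the rules $opposes(X,Y)\leftarrow opposes(Y,X).$ $defeated(R,C,R1)\leftarrow according\_to(R,C),according\_to(R1,C1),despite(R,R1).$ $defeated(R,C,R1)\leftarrow according\_to(R,C),legally\_valid(R1,C1),opposes(C,C1),subject\_to(R1,R).$ $defeated(R,C,R1)\leftarrow according\_to(R,C),legally\_valid(R1,C1),strong\_subject\_to(R1,R).$ $not\_legally\_valid(R)\leftarrow defeated(R,C,R1).$ $legally\_valid(R,C)\leftarrow according\_to(R,C),not\ not\_legally\_valid(R).$ $is\_legal(C)\leftarrow legally\_valid(R,C).$ Answer sets are the stable models of (the ground instantiation of) this program under the standard stable model semantics. *)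

theory Defs
  imports Main
begin

datatype 'r meta = Despite 'r 'r | SubjectTo 'r 'r | StrongSubjectTo 'r 'r

text \<open>Rules are identified by their ids (type 'r);
  each rule r has a precondition given by its positive atoms pre_pos r
  (b_1..b_m) and its negated atoms pre_neg r (b_{m+1}..b_n), and a conclusion concl r.\<close>
record ('a, 'r) config =
  rules   :: "'r set"
  pre_pos :: "'r \<Rightarrow> 'a set"
  pre_neg :: "'r \<Rightarrow> 'a set"
  concl   :: "'r \<Rightarrow> 'a"
  facts   :: "'a set"
  meta    :: "'r meta set"
  incons  :: "'a set set"

definition wf_config :: "('a, 'r) config \<Rightarrow> bool" where
  "wf_config Cfg \<longleftrightarrow>
     finite (rules Cfg) \<and> finite (facts Cfg) \<and> finite (meta Cfg) \<and> finite (incons Cfg) \<and>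
     (\<forall>r \<in> rules Cfg. finite (pre_pos Cfg r) \<and> finite (pre_neg Cfg r)) \<and>
     (\<forall>k \<in> incons Cfg. finite k \<and> card k \<ge> 2) \<and>
     (\<forall>m \<in> meta Cfg. case m of
         Despite ri rj \<Rightarrow> ri \<in> rules Cfg \<and> rj \<in> rules Cfg
       | SubjectTo ri rj \<Rightarrow> ri \<in> rules Cfg \<and> rj \<in> rules Cfg
       | StrongSubjectTo ri rj \<Rightarrow> ri \<in> rules Cfg \<and> rj \<in> rules Cfg)"

datatype ('a, 'r) gatom =
    IsLegal 'a
  | LegallyValid 'r 'a
  | AccordingTo 'r 'a
  | Opposes 'a 'a
  | Defeated 'r 'a 'r
  | NotLegallyValid 'r
  | Meta "'r meta"

text \<open>A ground rule: head, positive body, negative (default-negated) body.\<close>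
type_synonym ('a, 'r) grule = "('a, 'r) gatom \<times> ('a, 'r) gatom set \<times> ('a, 'r) gatom set"

definition reduct :: "('a, 'r) grule set \<Rightarrow> ('a, 'r) gatom set
                       \<Rightarrow> (('a, 'r) gatom \<times> ('a, 'r) gatom set) set" where
  "reduct P A = {(h, pos). \<exists>neg. (h, pos, neg) \<in> P \<and> neg \<inter> A = {}}"

definition closed_under :: "(('a, 'r) gatom \<times> ('a, 'r) gatom set) set \<Rightarrow> ('a, 'r) gatom set \<Rightarrow> bool" where
  "closed_under Q S \<longleftrightarrow> (\<forall>(h, pos) \<in> Q. pos \<subseteq> S \<longrightarrow> h \<in> S)"

definition least_model :: "(('a, 'r) gatom \<times> ('a, 'r) gatom set) set \<Rightarrow> ('a, 'r) gatom set" where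
  "least_model Q = \<Inter>{S. closed_under Q S}"

definition answer_set :: "('a, 'r) grule set \<Rightarrow> ('a, 'r) gatom set \<Rightarrow> bool" where
  "answer_set P A \<longleftrightarrow> A = least_model (reduct P A)"

definition asp_program :: "('a, 'r) config \<Rightarrow> ('a, 'r) grule set" where
  "asp_program Cfg =
     {(IsLegal f, {}, {}) | f. f \<in> facts Cfg}
   \<union> {(Meta m, {}, {}) | m. m \<in> meta Cfg}
   \<union> {(AccordingTo r (concl Cfg r), IsLegal ` pre_pos Cfg r, IsLegal ` pre_neg Cfg r) | r. r \<in> rules Cfg}
   \<union> {(Opposes a b, IsLegal ` (k - {a, b}), {}) | k a b. k \<in> incons Cfg \<and> a \<in> k \<and> b \<in> k \<and> a \<noteq> b}
   \<union> {(Opposes x y, {Opposes y x}, {}) | x y. True}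
   \<union> {(Defeated r c r1, {AccordingTo r c, AccordingTo r1 c1, Meta (Despite r r1)}, {}) | r c r1 c1. True}
   \<union> {(Defeated r c r1, {AccordingTo r c, LegallyValid r1 c1, Opposes c c1, Meta (SubjectTo r1 r)}, {})
        | r c r1 c1. True}
   \<union> {(Defeated r c r1, {AccordingTo r c, LegallyValid r1 c1, Meta (StrongSubjectTo r1 r)}, {})
        | r c r1 c1. True}
   \<union> {(NotLegallyValid r, {Defeated r c r1}, {}) | r c r1. True}
   \<union> {(LegallyValid r c, {AccordingTo r c}, {NotLegallyValid r}) | r c. True}
   \<union> {(IsLegal c, {LegallyValid r c}, {}) | r c. True}"

definition sat_pre :: "('a, 'r) config \<Rightarrow> ('a, 'r) gatom set \<Rightarrow> 'r \<Rightarrow> bool" where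
  "sat_pre Cfg S r \<longleftrightarrow> IsLegal ` pre_pos Cfg r \<subseteq> S \<and> IsLegal ` pre_neg Cfg r \<inter> S = {}"

fun legal_kind :: "('a, 'r) gatom \<Rightarrow> bool" where
  "legal_kind (IsLegal _) = True"
| "legal_kind (LegallyValid _ _) = True"
| "legal_kind _ = False"

definition opp_cond :: "('a, 'r) config \<Rightarrow> ('a, 'r) gatom set \<Rightarrow> 'r \<Rightarrow> 'r \<Rightarrow> bool" where
  "opp_cond Cfg S ri rj \<longleftrightarrow>
     (\<exists>k \<in> incons Cfg. concl Cfg ri \<in> k \<and> concl Cfg rj \<in> k \<and> concl Cfg ri \<noteq> concl Cfg rj \<and>
        IsLegal ` (k - {concl Cfg rj}) \<subseteq> S)"

definition legal_model :: "('a, 'r) config \<Rightarrow> ('a, 'r) gatom set \<Rightarrow> bool" where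
  "legal_model Cfg S \<longleftrightarrow>
     (\<forall>x \<in> S. legal_kind x) \<and>
     \<comment> \<open>A1\<close>
     (\<forall>f \<in> facts Cfg. IsLegal f \<in> S) \<and>
     \<comment> \<open>A2\<close>
     (\<forall>r \<in> rules Cfg. LegallyValid r (concl Cfg r) \<in> S \<longrightarrow>
         sat_pre Cfg S r \<and> IsLegal (concl Cfg r) \<in> S) \<and>
     \<comment> \<open>A3\<close>
     (\<forall>c. IsLegal c \<in> S \<longrightarrow>
         c \<in> facts Cfg \<or> (\<exists>r \<in> rules Cfg. LegallyValid r (concl Cfg r) \<in> S \<and> c = concl Cfg r)) \<and>
     \<comment> \<open>A4\<close>
     (\<forall>ri \<in> rules Cfg. \<forall>rj \<in> rules Cfg.
         Despite ri rj \<in> meta Cfg \<and> sat_pre Cfg S rj \<longrightarrow> LegallyValid ri (concl Cfg ri) \<notin> S) \<and>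
     \<comment> \<open>A5\<close>
     (\<forall>ri \<in> rules Cfg. \<forall>rj \<in> rules Cfg.
         StrongSubjectTo ri rj \<in> meta Cfg \<and> LegallyValid ri (concl Cfg ri) \<in> S
           \<longrightarrow> LegallyValid rj (concl Cfg rj) \<notin> S) \<and>
     \<comment> \<open>A6\<close>
     (\<forall>ri \<in> rules Cfg. \<forall>rj \<in> rules Cfg.
         SubjectTo ri rj \<in> meta Cfg \<and> LegallyValid ri (concl Cfg ri) \<in> S \<and> opp_cond Cfg S ri rj
           \<longrightarrow> LegallyValid rj (concl Cfg rj) \<notin> S) \<and>
     \<comment> \<open>A7\<close>
     (\<forall>r \<in> rules Cfg. sat_pre Cfg S r \<and> LegallyValid r (concl Cfg r) \<notin> S \<longrightarrow>
         (\<exists>r' \<in> rules Cfg.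
             (Despite r r' \<in> meta Cfg \<and> sat_pre Cfg S r')
           \<or> (StrongSubjectTo r' r \<in> meta Cfg \<and> LegallyValid r' (concl Cfg r') \<in> S)
           \<or> (SubjectTo r' r \<in> meta Cfg \<and> LegallyValid r' (concl Cfg r') \<in> S \<and> opp_cond Cfg S r' r)))"

end

theory Submission
  imports Defs
begin

text \<open>An answer set A is closed under every rule whose body holds in A, and it is disjoint from
  every set of atoms that is unfounded with respect to A; in particular each atom of A has a rule
  supporting it. For the encoding this gives a completion-style characterisation of every
  predicate inside A, e.g. legally_valid(r,c) holds iff according_to(r,c) does and r is not
  defeated. The predicate opposes needs the unfounded-set argument, because its symmetry rule
  is circular. The conditions (A1)--(A7) are then read off: a meta-atom that blocks a rule fires
  a defeated rule, and a rule whose precondition holds but which is not legally valid must have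
  been defeated.\<close>

lemma least_model_closed: "closed_under Q (least_model Q)"
  unfolding closed_under_def least_model_def by blast

lemma least_model_least: "closed_under Q S \<Longrightarrow> least_model Q \<subseteq> S"
  unfolding least_model_def by blast

lemma answer_set_rule_closed:
  assumes "answer_set P A" "(h, pos, neg) \<in> P" "pos \<subseteq> A" "neg \<inter> A = {}"
  shows "h \<in> A"
proof -
  have "(h, pos) \<in> reduct P A"
    unfolding reduct_def using assms(2,4) by blast
  with least_model_closed[of "reduct P A"] assms(1,3) show ?thesis
    unfolding answer_set_def closed_under_def by auto
qed

lemma answer_set_unfounded_disjoint:
  assumes A: "answer_set P A"
    and unfounded: "\<And>h pos neg. (h, pos, neg) \<in> P \<Longrightarrow> h \<in> B \<Longrightarrow> pos \<subseteq> A \<Longrightarrow> neg \<inter> A = {}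
                      \<Longrightarrow> pos \<inter> B \<noteq> {}"
  shows "A \<inter> B = {}"
proof -
  have "closed_under (reduct P A) (A - B)"
    unfolding closed_under_def reduct_def
    using answer_set_rule_closed[OF A] unfounded by blast
  then have "A \<subseteq> A - B"
    using least_model_least A unfolding answer_set_def by metis
  then show ?thesis by blast
qed

lemma answer_set_supported:
  assumes "answer_set P A" "h \<in> A"
  obtains pos neg where "(h, pos, neg) \<in> P" "pos \<subseteq> A" "neg \<inter> A = {}"
  using answer_set_unfounded_disjoint[OF assms(1), of "{h}"] assms(2) by blast

lemma asp_program_intros:
  "f \<in> facts Cfg \<Longrightarrow> (IsLegal f, {}, {}) \<in> asp_program Cfg"
  "m \<in> meta Cfg \<Longrightarrow> (Meta m, {}, {}) \<in> asp_program Cfg"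
  "r \<in> rules Cfg \<Longrightarrow>
     (AccordingTo r (concl Cfg r), IsLegal ` pre_pos Cfg r, IsLegal ` pre_neg Cfg r) \<in> asp_program Cfg"
  "k \<in> incons Cfg \<Longrightarrow> a \<in> k \<Longrightarrow> b \<in> k \<Longrightarrow> a \<noteq> b \<Longrightarrow>
     (Opposes a b, IsLegal ` (k - {a, b}), {}) \<in> asp_program Cfg"
  "(Opposes x y, {Opposes y x}, {}) \<in> asp_program Cfg"
  "(Defeated r c r1, {AccordingTo r c, AccordingTo r1 c1, Meta (Despite r r1)}, {}) \<in> asp_program Cfg"
  "(Defeated r c r1, {AccordingTo r c, LegallyValid r1 c1, Opposes c c1, Meta (SubjectTo r1 r)}, {})
     \<in> asp_program Cfg"
  "(Defeated r c r1, {AccordingTo r c, LegallyValid r1 c1, Meta (StrongSubjectTo r1 r)}, {})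
     \<in> asp_program Cfg"
  "(NotLegallyValid r, {Defeated r c r1}, {}) \<in> asp_program Cfg"
  "(LegallyValid r c, {AccordingTo r c}, {NotLegallyValid r}) \<in> asp_program Cfg"
  "(IsLegal c, {LegallyValid r c}, {}) \<in> asp_program Cfg"
  by (auto simp: asp_program_def)

definition opposed :: "('a, 'r) config \<Rightarrow> ('a, 'r) gatom set \<Rightarrow> 'a \<Rightarrow> 'a \<Rightarrow> bool" where
  "opposed Cfg S a b \<longleftrightarrow> (\<exists>k \<in> incons Cfg. a \<in> k \<and> b \<in> k \<and> a \<noteq> b \<and> IsLegal ` (k - {a, b}) \<subseteq> S)"

lemma opposed_commute: "opposed Cfg S a b \<longleftrightarrow> opposed Cfg S b a"
  unfolding opposed_def by (auto simp: insert_commute)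

lemma opp_cond_iff_opposed:
  "opp_cond Cfg S ri rj \<longleftrightarrow> opposed Cfg S (concl Cfg ri) (concl Cfg rj) \<and> IsLegal (concl Cfg ri) \<in> S"
  unfolding opp_cond_def opposed_def by blast

locale asp_answer_set =
  fixes Cfg :: "('a, 'r) config" and A :: "('a, 'r) gatom set"
  assumes answer_set: "answer_set (asp_program Cfg) A"
begin

lemma rule_closed: "(h, pos, neg) \<in> asp_program Cfg \<Longrightarrow> pos \<subseteq> A \<Longrightarrow> neg \<inter> A = {} \<Longrightarrow> h \<in> A"
  using answer_set_rule_closed[OF answer_set] .

lemma supported:
  assumes "h \<in> A"
  obtains pos neg where "(h, pos, neg) \<in> asp_program Cfg" "pos \<subseteq> A" "neg \<inter> A = {}"
  using answer_set_supported[OF answer_set assms] .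

lemma meta_iff: "Meta m \<in> A \<longleftrightarrow> m \<in> meta Cfg"
proof
  assume "Meta m \<in> A"
  then obtain pos neg where "(Meta m, pos, neg) \<in> asp_program Cfg" by (rule supported)
  then show "m \<in> meta Cfg" by (auto simp: asp_program_def)
qed (auto intro: rule_closed asp_program_intros)

lemma according_to_iff:
  "AccordingTo r c \<in> A \<longleftrightarrow> r \<in> rules Cfg \<and> c = concl Cfg r \<and> sat_pre Cfg A r"
proof
  assume "AccordingTo r c \<in> A"
  then obtain pos neg where "(AccordingTo r c, pos, neg) \<in> asp_program Cfg" "pos \<subseteq> A" "neg \<inter> A = {}"
    by (rule supported)
  then show "r \<in> rules Cfg \<and> c = concl Cfg r \<and> sat_pre Cfg A r"
    by (auto simp: asp_program_def sat_pre_def)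
qed (auto intro: rule_closed asp_program_intros simp: sat_pre_def)

lemma legally_valid_iff: "LegallyValid r c \<in> A \<longleftrightarrow> AccordingTo r c \<in> A \<and> NotLegallyValid r \<notin> A"
proof
  assume "LegallyValid r c \<in> A"
  then obtain pos neg where "(LegallyValid r c, pos, neg) \<in> asp_program Cfg" "pos \<subseteq> A" "neg \<inter> A = {}"
    by (rule supported)
  then show "AccordingTo r c \<in> A \<and> NotLegallyValid r \<notin> A"
    by (auto simp: asp_program_def)
qed (auto intro: rule_closed asp_program_intros)

lemma not_legally_valid_iff: "NotLegallyValid r \<in> A \<longleftrightarrow> (\<exists>c r1. Defeated r c r1 \<in> A)"
proof
  assume "NotLegallyValid r \<in> A"
  then obtain pos neg where "(NotLegallyValid r, pos, neg) \<in> asp_program Cfg" "pos \<subseteq> A"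
    by (rule supported)
  then show "\<exists>c r1. Defeated r c r1 \<in> A"
    by (auto simp: asp_program_def)
qed (auto intro: rule_closed asp_program_intros)

lemma is_legal_iff: "IsLegal c \<in> A \<longleftrightarrow> c \<in> facts Cfg \<or> (\<exists>r. LegallyValid r c \<in> A)"
proof
  assume "IsLegal c \<in> A"
  then obtain pos neg where "(IsLegal c, pos, neg) \<in> asp_program Cfg" "pos \<subseteq> A"
    by (rule supported)
  then show "c \<in> facts Cfg \<or> (\<exists>r. LegallyValid r c \<in> A)"
    by (auto simp: asp_program_def)
qed (auto intro: rule_closed asp_program_intros)

lemma opposes_iff: "Opposes a b \<in> A \<longleftrightarrow> opposed Cfg A a b"
proof
  txt \<open>The only other rule for an opposes atom is the symmetry rule, whose body is again
    an unjustified opposes atom.\<close>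
  let ?B = "{Opposes x y | x y. \<not> opposed Cfg A x y}"
  have "A \<inter> ?B = {}"
  proof (rule answer_set_unfounded_disjoint[OF answer_set])
    fix h pos neg
    assume "(h, pos, neg) \<in> asp_program Cfg" "h \<in> ?B" "pos \<subseteq> A"
    then show "pos \<inter> ?B \<noteq> {}"
      by (auto simp: asp_program_def opposed_def insert_commute)
  qed
  then show "Opposes a b \<in> A \<Longrightarrow> opposed Cfg A a b" by blast
next
  assume "opposed Cfg A a b"
  then show "Opposes a b \<in> A"
    unfolding opposed_def by (auto intro: rule_closed asp_program_intros)
qed

lemma defeated_iff:
  "Defeated r c r1 \<in> A \<longleftrightarrow> AccordingTo r c \<in> A \<and>
     (\<exists>c1. (AccordingTo r1 c1 \<in> A \<and> Despite r r1 \<in> meta Cfg)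
         \<or> (LegallyValid r1 c1 \<in> A \<and> Opposes c c1 \<in> A \<and> SubjectTo r1 r \<in> meta Cfg)
         \<or> (LegallyValid r1 c1 \<in> A \<and> StrongSubjectTo r1 r \<in> meta Cfg))"
  (is "_ \<longleftrightarrow> ?defeat")
proof
  assume "Defeated r c r1 \<in> A"
  then obtain pos neg where "(Defeated r c r1, pos, neg) \<in> asp_program Cfg" "pos \<subseteq> A"
    by (rule supported)
  then show ?defeat
    by (auto simp: asp_program_def meta_iff[symmetric])
qed (auto intro: rule_closed asp_program_intros simp: meta_iff[symmetric])

lemma legally_validD:
  assumes "LegallyValid r c \<in> A"
  shows "r \<in> rules Cfg" "c = concl Cfg r" "sat_pre Cfg A r" "IsLegal c \<in> A"
  using assms legally_valid_iff according_to_iff is_legal_iff by blast+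

lemma defeated_not_legally_valid: "Defeated r c' r1 \<in> A \<Longrightarrow> LegallyValid r c \<notin> A"
  using legally_valid_iff not_legally_valid_iff by blast

lemma is_legal_supported:
  "IsLegal c \<in> A \<Longrightarrow> c \<in> facts Cfg \<or> (\<exists>r \<in> rules Cfg. LegallyValid r (concl Cfg r) \<in> A \<and> c = concl Cfg r)"
  using is_legal_iff legally_validD by metis

lemma despite_excludes:
  assumes "Despite ri rj \<in> meta Cfg" "rj \<in> rules Cfg" "sat_pre Cfg A rj"
  shows "LegallyValid ri c \<notin> A"
proof
  assume "LegallyValid ri c \<in> A"
  with assms have "Defeated ri c rj \<in> A"
    using defeated_iff legally_valid_iff according_to_iff by blast
  with \<open>LegallyValid ri c \<in> A\<close> show False
    using defeated_not_legally_valid by blast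
qed

lemma strong_subject_to_excludes:
  assumes "StrongSubjectTo ri rj \<in> meta Cfg" "LegallyValid ri ci \<in> A"
  shows "LegallyValid rj cj \<notin> A"
proof
  assume "LegallyValid rj cj \<in> A"
  with assms have "Defeated rj cj ri \<in> A"
    using defeated_iff legally_valid_iff by blast
  with \<open>LegallyValid rj cj \<in> A\<close> show False
    using defeated_not_legally_valid by blast
qed

lemma subject_to_excludes:
  assumes "SubjectTo ri rj \<in> meta Cfg" "LegallyValid ri (concl Cfg ri) \<in> A" "opp_cond Cfg A ri rj"
  shows "LegallyValid rj (concl Cfg rj) \<notin> A"
proof
  assume "LegallyValid rj (concl Cfg rj) \<in> A"
  moreover have "Opposes (concl Cfg rj) (concl Cfg ri) \<in> A"
    using assms(3) opp_cond_iff_opposed opposed_commute opposes_iff by metis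
  ultimately have "Defeated rj (concl Cfg rj) ri \<in> A"
    using assms(1,2) defeated_iff legally_valid_iff by blast
  with \<open>LegallyValid rj (concl Cfg rj) \<in> A\<close> show False
    using defeated_not_legally_valid by blast
qed

lemma exclusion_justified:
  assumes "r \<in> rules Cfg" "sat_pre Cfg A r" "LegallyValid r (concl Cfg r) \<notin> A"
  shows "\<exists>r' \<in> rules Cfg.
             (Despite r r' \<in> meta Cfg \<and> sat_pre Cfg A r')
           \<or> (StrongSubjectTo r' r \<in> meta Cfg \<and> LegallyValid r' (concl Cfg r') \<in> A)
           \<or> (SubjectTo r' r \<in> meta Cfg \<and> LegallyValid r' (concl Cfg r') \<in> A \<and> opp_cond Cfg A r' r)"
proof -
  have "AccordingTo r (concl Cfg r) \<in> A"
    using assms(1,2) according_to_iff by blast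
  with assms(3) obtain c r1 where defeated: "Defeated r c r1 \<in> A"
    using legally_valid_iff not_legally_valid_iff by blast
  then have "c = concl Cfg r"
    using defeated_iff according_to_iff by blast
  from defeated obtain c1 where
    "(AccordingTo r1 c1 \<in> A \<and> Despite r r1 \<in> meta Cfg)
     \<or> (LegallyValid r1 c1 \<in> A \<and> Opposes c c1 \<in> A \<and> SubjectTo r1 r \<in> meta Cfg)
     \<or> (LegallyValid r1 c1 \<in> A \<and> StrongSubjectTo r1 r \<in> meta Cfg)"
    using defeated_iff by blast
  then show ?thesis
  proof (elim disjE conjE)
    assume "AccordingTo r1 c1 \<in> A" "Despite r r1 \<in> meta Cfg"
    then show ?thesis using according_to_iff by blast
  next
    assume valid: "LegallyValid r1 c1 \<in> A" and "Opposes c c1 \<in> A" "SubjectTo r1 r \<in> meta Cfg"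
    have "opposed Cfg A c1 c"
      using \<open>Opposes c c1 \<in> A\<close> opposes_iff opposed_commute by metis
    then have "opp_cond Cfg A r1 r"
      unfolding opp_cond_iff_opposed using legally_validD[OF valid] \<open>c = concl Cfg r\<close> by simp
    then show ?thesis
      using valid legally_validD(1,2)[OF valid] \<open>SubjectTo r1 r \<in> meta Cfg\<close> by auto
  next
    assume valid: "LegallyValid r1 c1 \<in> A" and "StrongSubjectTo r1 r \<in> meta Cfg"
    then show ?thesis using legally_validD(1,2)[OF valid] by auto
  qed
qed

end

lemma sat_pre_legal_part: "sat_pre Cfg {x \<in> S. legal_kind x} r \<longleftrightarrow> sat_pre Cfg S r"
  unfolding sat_pre_def by auto

lemma IsLegal_image_subset_legal_part: "IsLegal ` X \<subseteq> {x \<in> S. legal_kind x} \<longleftrightarrow> IsLegal ` X \<subseteq> S"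
  by auto

lemma opp_cond_legal_part: "opp_cond Cfg {x \<in> S. legal_kind x} ri rj \<longleftrightarrow> opp_cond Cfg S ri rj"
  unfolding opp_cond_def IsLegal_image_subset_legal_part ..

theorem lemma4:
  fixes Cfg :: "('a, 'r) config" and A :: "('a, 'r) gatom set"
  assumes "wf_config Cfg"
    and "answer_set (asp_program Cfg) A"
  shows "legal_model Cfg {x \<in> A. legal_kind x}"
proof -
  interpret asp_answer_set Cfg A
    using assms(2) by unfold_locales
  show ?thesis
    unfolding legal_model_def sat_pre_legal_part opp_cond_legal_part mem_Collect_eq
      legal_kind.simps simp_thms
  proof (intro conjI)
    show "\<forall>f \<in> facts Cfg. IsLegal f \<in> A"
      using is_legal_iff by simp
  qed (use legally_validD(3,4) is_legal_supported despite_excludes strong_subject_to_excludes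
      subject_to_excludes exclusion_justified in blast)+
qed

end
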